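(* Define $\sigma:\mathbb N\to\mathbb N$ by $$\sigma(n)=\begin{cases}\lfloor(\varphi+1) n-2\rfloor, & n\in R_{1,0},\\ \lfloor\varphi n+2\rfloor, & n\in R_{3,1},\\ \lfloor(\varphi-1) n+2\rfloor, & n\in R_{2,2},\\ \lfloor(\varphi-1) n\rfloor, & n\in R_{2,0}.\end{cases}$$ Then $\sigma$ is an $R_{i,j}$-permutation of $\mathbb N$ of order $6$ (first values $2,3,1,8,11,5,16,4,7,24,\dots$), and its powers are the $R_{i,j}$-permutations $$\sigma^2(n)=\begin{cases}\lfloor\varphi n+2\rfloor, & n\in R_{2,2},\\ \lfloor\varphi n-2\rfloor, & n\in R_{1,0},\\ n, & n\in R_{4,0}\cup R_{3,1},\\ \lfloor(2-\varphi)n+1\rfloor, & n\in R_{3,2},\end{cases}\qquad \sigma^3(n)=\begin{cases}\lfloor\varphi n+2\rfloor, & n\in R_{3,1},\\ \lfloor(\varphi-1)n\rfloor, & n\in R_{4,0},\\ n, & n\in R_{3,2}\cup R_{2,2}\cup R_{1,0},\end{cases}$$ $$\sigma^4(n)=\begin{cases}\lfloor(\varphi+1)n-2\rfloor, & n\in R_{1,0},\\ \lfloor(\varphi-1)n+2\rfloor, & n\in R_{2,2},\\ \lfloor(\varphi-1)n\rfloor, & n\in R_{3,2},\\ n, & n\in R_{4,0}\cup R_{3,1},\end{cases}\qquad \sigma^5(n)=\sigma^{-1}(n)=\begin{cases}\lfloor\varphi n+2\rfloor, & n\in R_{1,1},\\ \lfloor\varphi n-2\rfloor, & n\in R_{1,0},\\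 \lfloor(\varphi-1)n\rfloor, & n\in R_{4,0},\\ \lfloor(2-\varphi)n+1\rfloor, & n\in R_{3,2}.\end{cases}$$
   Context: $\mathbb N=\{1,2,\dots\}$, $\varphi=\frac{1+\sqrt5}{2}$, $F$ the Fibonacci numbers ($F(0)=0,F(1)=F(2)=1$). For $i\in\mathbb Z^{\ge0},j\in\mathbb Z$, $R_{i,j}$ is the range of $n\mapsto F(i+1)\lfloor n\varphi\rfloor+F(i)n-j$, $n\in\mathbb N$. An $R_{i,j}$-permutation is a permutation $\pi$ of $\mathbb N$ defined piecewise on a finite partition of $\mathbb N$ into sets $R_{i,j}$, with $\pi(n)=\lfloor(a\varphi+b)n+c\rfloor$ on each piece for integers $a,b,c$ depending on the piece. Powers denote iterated composition. *)

theory Defs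
  imports Complex_Main "HOL-Number_Theory.Fib"
begin

definition phi :: real where "phi = (1 + sqrt 5) / 2"

definition R :: "nat \<Rightarrow> int \<Rightarrow> int set" where
  "R i j = {int (fib (i+1)) * \<lfloor>of_int n * phi\<rfloor> + int (fib i) * n - j | n::int. n \<ge> 1}"

definition Rpartition :: "(nat \<times> int) list \<Rightarrow> bool" where
  "Rpartition ps \<longleftrightarrow>
     (\<forall>k < length ps. \<forall>l < length ps. k \<noteq> l \<longrightarrow>
        R (fst (ps!k)) (snd (ps!k)) \<inter> R (fst (ps!l)) (snd (ps!l)) = {}) \<and>
     (\<Union>p \<in> set ps. R (fst p) (snd p)) = {1..}"

definition Rperm :: "(int \<Rightarrow> int) \<Rightarrow> bool" where
  "Rperm \<pi> \<longleftrightarrow> bij_betw \<pi> {1..} {1..} \<and>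
     (\<exists>ps :: ((nat \<times> int) \<times> (int \<times> int \<times> int)) list.
        Rpartition (map fst ps) \<and>
        (\<forall>((i,j),(a,b,c)) \<in> set ps. \<forall>n \<in> R i j.
            \<pi> n = \<lfloor>(of_int a * phi + of_int b) * of_int n + of_int c\<rfloor>))"

definition sigma :: "int \<Rightarrow> int" where
  "sigma n = (if n \<in> R 1 0 then \<lfloor>(phi + 1) * n - 2\<rfloor>
              else if n \<in> R 3 1 then \<lfloor>phi * n + 2\<rfloor>
              else if n \<in> R 2 2 then \<lfloor>(phi - 1) * n + 2\<rfloor>
              else \<lfloor>(phi - 1) * n\<rfloor>)"

end

theory Submission
  imports Defs "HOL-Computational_Algebra.Primes" "HOL-Library.Disjoint_Sets"
begin

text \<open>
  Write A k = \<lfloor>k\<phi>\<rfloor> and B k = A k + k for the lower and upper Wythoff sequences. As \<phi> is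
  irrational, A k = m iff m/\<phi> < k < (m+1)/\<phi>, and B k = m iff m/\<phi>^2 < k < (m+1)/\<phi>^2;
  since 1/\<phi> + 1/\<phi>^2 = 1, exactly one of these two intervals contains an integer, so A and B
  partition the positive integers. Hence each R i j occurring here is the range of a word in A
  and B on the positive integers (R 1 0 of B, R 1 1 of AA, R 2 0 of AB, R 2 2 of AAA, R 3 1 of
  AAB, R 3 2 of ABA, R 4 0 of ABB), and the ranges of B, AAA, AAB, ABA, ABB partition the
  positive integers. On these words sigma acts by the cycles B \<mapsto> ABA \<mapsto> AAA \<mapsto> B and
  AAB \<mapsto> ABB \<mapsto> AAB, so it has order 6, and each floor formula for a power of sigma is an
  identity between two words. All of them follow from one computation with the fractional part
  k\<phi> - A k \<in> (0, 1) and \<phi>^2 = \<phi> + 1.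
\<close>

lemma square_neq_5_times_square:
  fixes p q :: int
  assumes "q \<noteq> 0"
  shows "p\<^sup>2 \<noteq> 5 * q\<^sup>2"
proof
  assume eq: "p\<^sup>2 = 5 * q\<^sup>2"
  have five: "prime (5::int)"
    by (simp add: prime_nat_iff' atLeastLessThan_nat_numeral)
  with assms eq have "p \<noteq> 0" by auto
  have "multiplicity 5 (p\<^sup>2) = 2 * multiplicity 5 p"
    using five \<open>p \<noteq> 0\<close> by (simp add: prime_elem_multiplicity_power_distrib)
  moreover have "multiplicity 5 (5 * q\<^sup>2) = Suc (2 * multiplicity 5 q)"
    using five assms by (simp add: multiplicity_times_same prime_elem_multiplicity_power_distrib)
  ultimately have "2 * multiplicity 5 p = Suc (2 * multiplicity 5 q)"
    using eq by simp
  then show False by presburger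
qed

lemma floor_mult_eq_iff:
  fixes x \<alpha> \<beta> :: real
  assumes "\<alpha> * \<beta> = 1" "\<beta> > 0" "x * \<alpha> \<noteq> of_int m"
  shows "\<lfloor>x * \<alpha>\<rfloor> = m \<longleftrightarrow> m * \<beta> < x \<and> x < (m + 1) * \<beta>"
proof -
  have scale: "y < z \<longleftrightarrow> y * \<beta> < z * \<beta>" for y z
    using assms(2) by simp
  have x: "x * \<alpha> * \<beta> = x"
    using assms(1) by (simp add: mult.assoc)
  have "m \<le> x * \<alpha> \<longleftrightarrow> m * \<beta> < x"
    using scale[of m "x * \<alpha>"] x assms(3) by auto
  moreover have "x * \<alpha> < m + 1 \<longleftrightarrow> x < (m + 1) * \<beta>"
    using scale[of "x * \<alpha>" "m + 1"] x by simp
  ultimately show ?thesis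
    by (simp add: floor_eq_iff)
qed

lemma bij_betw_if_funpow_id:
  assumes "f ` S \<subseteq> S" "\<forall>x\<in>S. (f ^^ Suc n) x = x"
  shows "bij_betw f S S"
proof (rule bij_betw_byWitness[where f' = "f ^^ n"])
  have "(f ^^ m) ` S \<subseteq> S" for m
    using assms(1) by (induction m) auto
  then show "(f ^^ n) ` S \<subseteq> S" .
  show "\<forall>x\<in>S. (f ^^ n) (f x) = x" "\<forall>x\<in>S. f ((f ^^ n) x) = x"
    using assms(2) by (simp_all add: funpow_Suc_right del: funpow.simps(2)) (simp add: funpow_swap1)
qed (rule assms(1))

section \<open>The golden ratio\<close>

lemma phi_squared: "phi * phi = phi + 1"
  unfolding phi_def by (simp add: field_simps)

lemma phi_bounds: "1618/1000 < phi" "phi < 16181/10000"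
proof -
  have "2236/1000 < sqrt 5"
    by (rule real_less_rsqrt) (simp add: power2_eq_square)
  moreover have "sqrt 5 < 22362/10000"
    by (rule real_less_lsqrt) (simp_all add: power2_eq_square)
  ultimately show "1618/1000 < phi" "phi < 16181/10000"
    unfolding phi_def by simp_all
qed

lemma of_int_mult_phi_not_int:
  assumes "k \<noteq> 0"
  shows "of_int k * phi \<noteq> of_int m"
proof
  assume "of_int k * phi = of_int m"
  then have "of_int k * sqrt 5 = real_of_int (2 * m - k)"
    unfolding phi_def by (simp add: field_simps)
  then have "(of_int k * sqrt 5)\<^sup>2 = (real_of_int (2 * m - k))\<^sup>2"
    by simp
  then have "real_of_int ((2 * m - k)\<^sup>2) = of_int (5 * k\<^sup>2)"
    by (simp add: power_mult_distrib)
  then have "(2 * m - k)\<^sup>2 = 5 * k\<^sup>2"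
    by (simp only: of_int_eq_iff)
  with assms square_neq_5_times_square show False
    by blast
qed

section \<open>Wythoff sequences\<close>

definition lower_wythoff :: "int \<Rightarrow> int" where
  "lower_wythoff k = \<lfloor>of_int k * phi\<rfloor>"

definition upper_wythoff :: "int \<Rightarrow> int" where
  "upper_wythoff k = lower_wythoff k + k"

lemma lower_wythoff_frac_bounds:
  assumes "k \<noteq> 0"
  shows "0 < of_int k * phi - lower_wythoff k" "of_int k * phi - lower_wythoff k < 1"
  using of_int_mult_phi_not_int[OF assms, of "lower_wythoff k"]
  unfolding lower_wythoff_def by linarith+

text \<open>
  With e = k\<phi> - A k \<in> (0, 1) and \<phi>^2 = \<phi> + 1 one gets x = (n - m) + c + e d, so the floor is
  n whenever both c and c + d lie in [m, m + 1].
\<close>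

lemma floor_affine_lower_wythoff:
  fixes a b p q m :: int and c :: real
  assumes "k \<noteq> 0"
    and x: "x = (a * phi + b) * (p * lower_wythoff k + q * k) + c"
    and n: "n = (a * p + a * q + b * p) * lower_wythoff k + (a * p + b * q) * k + m"
  defines "d \<equiv> a * (p + q - p * phi)"
  assumes "d \<noteq> 0" "m \<le> c" "m \<le> c + d" "c \<le> m + 1" "c + d \<le> m + 1"
  shows "\<lfloor>x\<rfloor> = n"
proof -
  define e where "e = of_int k * phi - lower_wythoff k"
  have e: "0 < e" "e < 1"
    using lower_wythoff_frac_bounds[OF assms(1)] unfolding e_def by simp_all
  have "x = of_int (n - m) + c + e * d"
    unfolding x n e_def d_def using phi_squared
    by (simp only: of_int_add of_int_mult of_int_diff) algebra
  moreover have "m \<le> c + e * d \<and> c + e * d < m + 1"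
  proof (cases "d > 0")
    case True
    then have "0 < e * d" "e * d < d" using e by simp_all
    with assms show ?thesis by linarith
  next
    case False
    then have "d < e * d" "e * d < 0" using e \<open>d \<noteq> 0\<close> by (simp_all add: mult_pos_neg)
    with assms show ?thesis by linarith
  qed
  ultimately show ?thesis
    by (simp add: floor_eq_iff)
qed

lemma lower_wythoff_eq_iff:
  assumes "k \<noteq> 0"
  shows "lower_wythoff k = m \<longleftrightarrow> m * (phi - 1) < k \<and> k < (m + 1) * (phi - 1)"
  unfolding lower_wythoff_def
  using phi_squared phi_bounds of_int_mult_phi_not_int[OF assms]
  by (intro floor_mult_eq_iff) (simp_all add: algebra_simps)

lemma upper_wythoff_eq_iff:
  assumes "k \<noteq> 0"
  shows "upper_wythoff k = m \<longleftrightarrow> m * (2 - phi) < k \<and> k < (m + 1) * (2 - phi)"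
proof -
  have "upper_wythoff k = \<lfloor>of_int k * (phi + 1)\<rfloor>"
    unfolding upper_wythoff_def lower_wythoff_def by (simp add: algebra_simps)
  moreover have "of_int k * (phi + 1) \<noteq> of_int m"
    using of_int_mult_phi_not_int[OF assms, of "m - k"] by (simp add: algebra_simps)
  ultimately show ?thesis
    using phi_squared phi_bounds
    by (simp only:) (intro floor_mult_eq_iff; simp add: algebra_simps)
qed

lemma lower_wythoff_neq_upper_wythoff:
  assumes "j \<noteq> 0" "k \<noteq> 0"
  shows "lower_wythoff j \<noteq> upper_wythoff k"
proof
  define m where "m = upper_wythoff k"
  assume "lower_wythoff j = upper_wythoff k"
  then have "m * (phi - 1) < j" "j < (of_int m + 1) * (phi - 1)"
    using lower_wythoff_eq_iff[OF assms(1)] unfolding m_def by blast+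
  moreover have "m * (2 - phi) < k" "k < (of_int m + 1) * (2 - phi)"
    using upper_wythoff_eq_iff[OF assms(2)] unfolding m_def by blast+
  ultimately have "m < j + k" "j + k < m + 1"
    by (simp_all add: algebra_simps)
  then show False by linarith
qed

lemma strict_mono_lower_wythoff: "strict_mono lower_wythoff"
proof (rule strict_monoI)
  fix j k :: int
  assume "j < k"
  then have "1 * phi \<le> of_int (k - j) * phi"
    using phi_bounds by (intro mult_right_mono) auto
  then have "of_int j * phi + 1 \<le> of_int k * phi"
    using phi_bounds by (simp add: algebra_simps)
  then have "\<lfloor>of_int j * phi + 1\<rfloor> \<le> \<lfloor>of_int k * phi\<rfloor>"
    by (rule floor_mono)
  then show "lower_wythoff j < lower_wythoff k"
    unfolding lower_wythoff_def by simp
qed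

lemma strict_mono_upper_wythoff: "strict_mono upper_wythoff"
  using strict_mono_lower_wythoff
  by (auto intro!: strict_monoI simp: upper_wythoff_def strict_mono_less add_strict_mono)

lemma lower_wythoff_pos:
  assumes "k \<ge> 1"
  shows "lower_wythoff k \<ge> 1"
proof -
  have "1 * 1 \<le> of_int k * phi"
    using assms phi_bounds by (intro mult_mono) auto
  then show ?thesis
    by (simp add: lower_wythoff_def le_floor_iff)
qed

lemma upper_wythoff_pos:
  assumes "k \<ge> 1"
  shows "upper_wythoff k \<ge> 1"
  using lower_wythoff_pos[OF assms] assms by (simp add: upper_wythoff_def)

lemmas wythoff_pos [simp] = lower_wythoff_pos upper_wythoff_pos

lemma lower_upper_wythoff_eq_iff [simp]:
  assumes "j \<ge> 1" "k \<ge> 1"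
  shows "lower_wythoff j = lower_wythoff k \<longleftrightarrow> j = k"
    and "upper_wythoff j = upper_wythoff k \<longleftrightarrow> j = k"
    and "lower_wythoff j = upper_wythoff k \<longleftrightarrow> False"
    and "upper_wythoff k = lower_wythoff j \<longleftrightarrow> False"
  using assms strict_mono_eq[OF strict_mono_lower_wythoff]
    strict_mono_eq[OF strict_mono_upper_wythoff]
    lower_wythoff_neq_upper_wythoff[of j k] by auto

lemma lower_upper_wythoff_cover:
  assumes "m \<ge> 1"
  shows "m \<in> lower_wythoff ` {1..} \<union> upper_wythoff ` {1..}"
proof -
  define t where "t = \<lfloor>(of_int m + 1) * (phi - 1)\<rfloor>"
  \<comment> \<open>the only candidate for \<open>lower_wythoff t = m\<close>; if it fails, \<open>upper_wythoff (m - t) = m\<close>\<close>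
  have not_int: "of_int i * (phi - 1) \<noteq> of_int j" if "i \<noteq> 0" for i j
    using of_int_mult_phi_not_int[OF that, of "i + j"] by (simp add: algebra_simps)
  have "t \<le> (of_int m + 1) * (phi - 1)"
    unfolding t_def by (rule of_int_floor_le)
  moreover have "(of_int m + 1) * (phi - 1) \<noteq> t"
    using not_int[of "m + 1" t] assms by simp
  ultimately have t_upper: "t < (of_int m + 1) * (phi - 1)"
    by simp
  have t_lower: "(of_int m + 1) * (phi - 1) - 1 < t"
    unfolding t_def by linarith
  have m_scaled: "0 < of_int m * (phi - 1)" "of_int m * (phi - 1) < of_int m * 1"
    using assms phi_bounds by (simp, intro mult_strict_left_mono) auto
  show ?thesis
  proof (cases "m * (phi - 1) < t")
    case True
    with m_scaled have "t \<ge> 1" by simp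
    moreover have "lower_wythoff t = m"
      using lower_wythoff_eq_iff True t_upper calculation by simp
    ultimately have "m \<in> lower_wythoff ` {1..}"
      by (metis atLeast_iff rev_image_eqI)
    then show ?thesis by simp
  next
    case False
    then have "t < m * (phi - 1)"
      using not_int[of m t] assms by (simp add: neq_iff)
    with m_scaled have "m - t \<ge> 1" by simp
    moreover have "upper_wythoff (m - t) = m"
      using upper_wythoff_eq_iff \<open>t < m * (phi - 1)\<close> t_lower calculation
      by (simp add: algebra_simps)
    ultimately have "m \<in> upper_wythoff ` {1..}"
      by (metis atLeast_iff rev_image_eqI)
    then show ?thesis by simp
  qed
qed

lemma lower_upper_wythoff_image_Un: "lower_wythoff ` {1..} \<union> upper_wythoff ` {1..} = {1..}"
  using lower_upper_wythoff_cover lower_wythoff_pos upper_wythoff_pos by fastforce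

lemma lower_wythoff_lower_wythoff:
  assumes "k \<noteq> 0"
  shows "lower_wythoff (lower_wythoff k) = lower_wythoff k + k - 1"
  unfolding lower_wythoff_def[of "lower_wythoff k"]
  by (rule floor_affine_lower_wythoff[where k = k and a = 1 and b = 0 and p = 1 and q = 0
        and c = 0 and m = "-1"])
    (use assms phi_bounds in simp_all)

lemma lower_wythoff_upper_wythoff:
  assumes "k \<noteq> 0"
  shows "lower_wythoff (upper_wythoff k) = 2 * lower_wythoff k + k"
  unfolding upper_wythoff_def lower_wythoff_def[of "lower_wythoff k + k"]
  by (rule floor_affine_lower_wythoff[where k = k and a = 1 and b = 0 and p = 1 and q = 1
        and c = 0 and m = 0])
    (use assms phi_bounds in simp_all)

lemma wythoff_words_closed_forms:
  assumes "k \<ge> 1"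
  shows "lower_wythoff (lower_wythoff (lower_wythoff k)) = 2 * lower_wythoff k + k - 2"
    and "lower_wythoff (lower_wythoff (upper_wythoff k)) = 3 * lower_wythoff k + 2 * k - 1"
    and "lower_wythoff (upper_wythoff (lower_wythoff k)) = 3 * lower_wythoff k + 2 * k - 2"
    and "lower_wythoff (upper_wythoff (upper_wythoff k)) = 5 * lower_wythoff k + 3 * k"
proof -
  have nonzero: "k \<noteq> 0" "lower_wythoff k \<noteq> 0" "upper_wythoff k \<noteq> 0"
    using assms lower_wythoff_pos upper_wythoff_pos by (metis not_one_le_zero)+
  note AA = lower_wythoff_lower_wythoff and AB = lower_wythoff_upper_wythoff
  show "lower_wythoff (lower_wythoff (lower_wythoff k)) = 2 * lower_wythoff k + k - 2"
    unfolding AA[OF nonzero(2)] unfolding AA[OF nonzero(1)] by simp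
  show "lower_wythoff (lower_wythoff (upper_wythoff k)) = 3 * lower_wythoff k + 2 * k - 1"
    unfolding AA[OF nonzero(3)] unfolding AB[OF nonzero(1)] unfolding upper_wythoff_def by simp
  show "lower_wythoff (upper_wythoff (lower_wythoff k)) = 3 * lower_wythoff k + 2 * k - 2"
    unfolding AB[OF nonzero(2)] unfolding AA[OF nonzero(1)] by simp
  show "lower_wythoff (upper_wythoff (upper_wythoff k)) = 5 * lower_wythoff k + 3 * k"
    unfolding AB[OF nonzero(3)] unfolding AB[OF nonzero(1)] unfolding upper_wythoff_def by simp
qed

lemma floor_phi_plus_1_times_upper_wythoff:
  assumes "k \<ge> 1"
  shows "\<lfloor>(phi + 1) * of_int (upper_wythoff k) - 2\<rfloor> =
    lower_wythoff (upper_wythoff (lower_wythoff k))"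
  unfolding wythoff_words_closed_forms[OF assms] unfolding upper_wythoff_def
  by (rule floor_affine_lower_wythoff[where k = k and a = 1 and b = 1 and p = 1 and q = 1
        and c = "-2" and m = "-2"])
    (use assms phi_bounds in \<open>simp_all add: algebra_simps\<close>)

lemma floor_phi_times_upper_wythoff:
  assumes "k \<ge> 1"
  shows "\<lfloor>phi * of_int (upper_wythoff k) - 2\<rfloor> =
    lower_wythoff (lower_wythoff (lower_wythoff k))"
  unfolding wythoff_words_closed_forms[OF assms] unfolding upper_wythoff_def
  by (rule floor_affine_lower_wythoff[where k = k and a = 1 and b = 0 and p = 1 and q = 1
        and c = "-2" and m = "-2"])
    (use assms phi_bounds in \<open>simp_all add: algebra_simps\<close>)

lemma floor_phi_times_lower_lower_wythoff:
  assumes "k \<ge> 1"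
  shows "\<lfloor>phi * of_int (lower_wythoff (lower_wythoff k)) + 2\<rfloor> =
    lower_wythoff (upper_wythoff k)"
  by (rule floor_affine_lower_wythoff[where k = k and a = 1 and b = 0 and p = 1 and q = 1
        and c = "2 - phi" and m = 0])
    (use assms phi_bounds in
      \<open>simp_all add: algebra_simps lower_wythoff_lower_wythoff lower_wythoff_upper_wythoff\<close>)

lemma floor_phi_minus_1_times_lower_upper_wythoff:
  assumes "k \<ge> 1"
  shows "\<lfloor>(phi - 1) * of_int (lower_wythoff (upper_wythoff k))\<rfloor> =
    lower_wythoff (lower_wythoff k)"
  by (rule floor_affine_lower_wythoff[where k = k and a = 1 and b = "-1" and p = 2 and q = 1
        and c = 0 and m = "-1"])
    (use assms phi_bounds in
      \<open>simp_all add: algebra_simps lower_wythoff_lower_wythoff lower_wythoff_upper_wythoff\<close>)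

lemma floor_phi_minus_1_times_lower_lower_lower_wythoff:
  assumes "k \<ge> 1"
  shows "\<lfloor>(phi - 1) * of_int (lower_wythoff (lower_wythoff (lower_wythoff k))) + 2\<rfloor> =
    upper_wythoff k"
  unfolding wythoff_words_closed_forms[OF assms] unfolding upper_wythoff_def
  by (rule floor_affine_lower_wythoff[where k = k and a = 1 and b = "-1" and p = 2 and q = 1
        and c = "4 - 2 * phi" and m = 0])
    (use assms phi_bounds in \<open>simp_all add: algebra_simps\<close>)

lemma floor_2_minus_phi_times_lower_upper_lower_wythoff:
  assumes "k \<ge> 1"
  shows "\<lfloor>(2 - phi) * of_int (lower_wythoff (upper_wythoff (lower_wythoff k))) + 1\<rfloor> =
    upper_wythoff k"
  unfolding wythoff_words_closed_forms[OF assms] unfolding upper_wythoff_def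
  by (rule floor_affine_lower_wythoff[where k = k and a = "-1" and b = 2 and p = 3 and q = 2
        and c = "2 * phi - 3" and m = 0])
    (use assms phi_bounds in \<open>simp_all add: algebra_simps\<close>)

lemmas floor_wythoff_identities [simp] =
  floor_phi_plus_1_times_upper_wythoff floor_phi_times_upper_wythoff
  floor_phi_times_lower_lower_wythoff floor_phi_minus_1_times_lower_upper_wythoff
  floor_phi_minus_1_times_lower_lower_lower_wythoff floor_2_minus_phi_times_lower_upper_lower_wythoff

section \<open>The sets R i j as images of Wythoff words\<close>

lemma R_eq_image: "R i j = (\<lambda>k. int (fib (i + 1)) * lower_wythoff k + int (fib i) * k - j) ` {1..}"
  unfolding R_def lower_wythoff_def by auto

lemma R_eq_image_wythoff_word:
  assumes "\<And>k. k \<ge> 1 \<Longrightarrow> w k = int (fib (i + 1)) * lower_wythoff k + int (fib i) * k - j"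
  shows "R i j = w ` {1..}"
  unfolding R_eq_image using assms by (intro image_cong) auto

lemma R_1_0: "R 1 0 = upper_wythoff ` {1..}"
  by (rule R_eq_image_wythoff_word) (simp add: upper_wythoff_def)

lemma R_1_1: "R 1 1 = lower_wythoff ` lower_wythoff ` {1..}"
  unfolding image_image
  by (rule R_eq_image_wythoff_word) (simp add: lower_wythoff_lower_wythoff)

lemma R_2_0: "R 2 0 = lower_wythoff ` upper_wythoff ` {1..}"
  unfolding image_image
  by (rule R_eq_image_wythoff_word) (simp add: lower_wythoff_upper_wythoff numeral_eq_Suc)

lemma R_2_2: "R 2 2 = lower_wythoff ` lower_wythoff ` lower_wythoff ` {1..}"
  unfolding image_image
  by (rule R_eq_image_wythoff_word) (simp add: wythoff_words_closed_forms numeral_eq_Suc)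

lemma R_3_1: "R 3 1 = lower_wythoff ` lower_wythoff ` upper_wythoff ` {1..}"
  unfolding image_image
  by (rule R_eq_image_wythoff_word) (simp add: wythoff_words_closed_forms numeral_eq_Suc)

lemma R_3_2: "R 3 2 = lower_wythoff ` upper_wythoff ` lower_wythoff ` {1..}"
  unfolding image_image
  by (rule R_eq_image_wythoff_word) (simp add: wythoff_words_closed_forms numeral_eq_Suc)

lemma R_4_0: "R 4 0 = lower_wythoff ` upper_wythoff ` upper_wythoff ` {1..}"
  unfolding image_image
  by (rule R_eq_image_wythoff_word) (simp add: wythoff_words_closed_forms numeral_eq_Suc)

text \<open>The simplifier rewrites \<open>R 1 j\<close> to \<open>R (Suc 0) j\<close>, hence the second form.\<close>

lemmas R_as_wythoff_words = R_1_0 R_1_1 R_2_0 R_2_2 R_3_1 R_3_2 R_4_0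
  R_1_0[unfolded One_nat_def] R_1_1[unfolded One_nat_def]

lemma R_1_1_split: "R 1 1 = R 2 2 \<union> R 3 1"
  unfolding R_1_1 R_2_2 R_3_1 by (simp flip: image_Un add: lower_upper_wythoff_image_Un)

lemma R_2_0_split: "R 2 0 = R 3 2 \<union> R 4 0"
  unfolding R_2_0 R_3_2 R_4_0 by (simp flip: image_Un add: lower_upper_wythoff_image_Un)

lemma R_1_0_1_1_2_0_cover: "R 1 0 \<union> R 1 1 \<union> R 2 0 = {1..}"
proof -
  have "R 1 1 \<union> R 2 0 = lower_wythoff ` {1..}"
    unfolding R_1_1 R_2_0 by (simp flip: image_Un add: lower_upper_wythoff_image_Un)
  then show ?thesis
    using lower_upper_wythoff_image_Un unfolding R_1_0 by blast
qed

lemma positive_wythoff_cases: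
  assumes "n \<ge> 1"
  obtains k where "k \<ge> 1" "n = upper_wythoff k"
    | k where "k \<ge> 1" "n = lower_wythoff (lower_wythoff (lower_wythoff k))"
    | k where "k \<ge> 1" "n = lower_wythoff (lower_wythoff (upper_wythoff k))"
    | k where "k \<ge> 1" "n = lower_wythoff (upper_wythoff (lower_wythoff k))"
    | k where "k \<ge> 1" "n = lower_wythoff (upper_wythoff (upper_wythoff k))"
proof -
  have "n \<in> R 1 0 \<union> R 2 2 \<union> R 3 1 \<union> R 3 2 \<union> R 4 0"
    using assms R_1_0_1_1_2_0_cover R_1_1_split R_2_0_split by auto
  then show ?thesis
    unfolding R_as_wythoff_words image_image using that by auto
qed

lemma RpartitionI:
  assumes "distinct ps" "disjoint_family_on (\<lambda>(i, j). R i j) (set ps)"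
    "(\<Union>(i, j) \<in> set ps. R i j) = {1..}"
  shows "Rpartition ps"
  unfolding Rpartition_def
proof (intro conjI allI impI)
  fix k l assume "k < length ps" "l < length ps" "k \<noteq> l"
  with assms(1,2) show "R (fst (ps ! k)) (snd (ps ! k)) \<inter> R (fst (ps ! l)) (snd (ps ! l)) = {}"
    by (auto simp: disjoint_family_on_def nth_eq_iff_index_eq split_beta)
qed (use assms(3) in \<open>simp add: split_beta\<close>)

lemma Rpartition_sigma: "Rpartition [(1,0),(3,1),(2,2),(2,0)]"
proof (rule RpartitionI)
  show "disjoint_family_on (\<lambda>(i, j). R i j) (set [(1,0),(3,1),(2,2),(2,0)])"
    by (auto simp: disjoint_family_on_def R_as_wythoff_words)
  show "(\<Union>(i, j) \<in> set [(1,0),(3,1),(2,2),(2,0)]. R i j) = {1..}"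
    using R_1_0_1_1_2_0_cover R_1_1_split by auto
qed simp

lemma Rpartition_five_pieces:
  assumes "distinct ps" "set ps = {(1,0),(2,2),(3,1),(3,2),(4,0)}"
  shows "Rpartition ps"
proof (rule RpartitionI)
  show "disjoint_family_on (\<lambda>(i, j). R i j) (set ps)"
    unfolding assms(2) by (auto simp: disjoint_family_on_def R_as_wythoff_words)
  show "(\<Union>(i, j) \<in> set ps. R i j) = {1..}"
    unfolding assms(2) using R_1_0_1_1_2_0_cover R_1_1_split R_2_0_split by auto
qed (rule assms(1))

lemma Rpartition_sigma_funpow_2: "Rpartition [(2,2),(1,0),(4,0),(3,1),(3,2)]"
  by (rule Rpartition_five_pieces) auto

lemma Rpartition_sigma_funpow_3: "Rpartition [(3,1),(4,0),(3,2),(2,2),(1,0)]"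
  by (rule Rpartition_five_pieces) auto

lemma Rpartition_sigma_funpow_4: "Rpartition [(1,0),(2,2),(3,2),(4,0),(3,1)]"
  by (rule Rpartition_five_pieces) auto

lemma Rpartition_sigma_inverse: "Rpartition [(1,1),(1,0),(4,0),(3,2)]"
proof (rule RpartitionI)
  show "disjoint_family_on (\<lambda>(i, j). R i j) (set [(1,1),(1,0),(4,0),(3,2)])"
    by (auto simp: disjoint_family_on_def R_as_wythoff_words)
  show "(\<Union>(i, j) \<in> set [(1,1),(1,0),(4,0),(3,2)]. R i j) = {1..}"
    using R_1_0_1_1_2_0_cover R_2_0_split by auto
qed simp

section \<open>The permutation sigma and its powers\<close>

lemma sigma_upper_wythoff:
  assumes "k \<ge> 1"
  shows "sigma (upper_wythoff k) = lower_wythoff (upper_wythoff (lower_wythoff k))"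
proof -
  have "upper_wythoff k \<in> R 1 0"
    using assms unfolding R_1_0 by simp
  then show ?thesis
    using floor_phi_plus_1_times_upper_wythoff[OF assms] by (simp add: sigma_def)
qed

lemma sigma_lower_lower_upper_wythoff:
  assumes "k \<ge> 1"
  shows "sigma (lower_wythoff (lower_wythoff (upper_wythoff k))) =
    lower_wythoff (upper_wythoff (upper_wythoff k))"
proof -
  have "lower_wythoff (lower_wythoff (upper_wythoff k)) \<in> R 3 1 - R 1 0"
    using assms unfolding R_1_0 R_3_1 by auto
  then show ?thesis
    using floor_phi_times_lower_lower_wythoff[of "upper_wythoff k"] assms by (simp add: sigma_def)
qed

lemma sigma_lower_lower_lower_wythoff:
  assumes "k \<ge> 1"
  shows "sigma (lower_wythoff (lower_wythoff (lower_wythoff k))) = upper_wythoff k"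
proof -
  have "lower_wythoff (lower_wythoff (lower_wythoff k)) \<in> R 2 2 - R 1 0 - R 3 1"
    using assms unfolding R_1_0 R_2_2 R_3_1 by auto
  then show ?thesis
    using floor_phi_minus_1_times_lower_lower_lower_wythoff[OF assms] by (simp add: sigma_def)
qed

lemma sigma_lower_upper_wythoff:
  assumes "k \<ge> 1"
  shows "sigma (lower_wythoff (upper_wythoff k)) = lower_wythoff (lower_wythoff k)"
proof -
  have "lower_wythoff (upper_wythoff k) \<notin> R 1 0 \<union> R 3 1 \<union> R 2 2"
    using assms unfolding R_1_0 R_2_2 R_3_1 by auto
  then show ?thesis
    using floor_phi_minus_1_times_lower_upper_wythoff[OF assms] by (simp add: sigma_def)
qed

lemmas sigma_wythoff_words [simp] =
  sigma_upper_wythoff sigma_lower_lower_upper_wythoff sigma_lower_lower_lower_wythoff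
  sigma_lower_upper_wythoff

lemma sigma_pos: "n \<ge> 1 \<Longrightarrow> sigma n \<ge> 1"
  by (erule positive_wythoff_cases) simp_all

lemma sigma_funpow_6: "n \<ge> 1 \<Longrightarrow> (sigma ^^ 6) n = n"
  by (erule positive_wythoff_cases) (simp_all add: eval_nat_numeral)

lemma sigma_funpow_5_inverse:
  "\<forall>n::int. n \<ge> 1 \<longrightarrow> sigma ((sigma ^^ 5) n) = n \<and> (sigma ^^ 5) (sigma n) = n"
  using sigma_funpow_6 by (simp add: eval_nat_numeral)

lemma sigma_funpow_not_id:
  "\<forall>k \<in> {1..5::nat}. \<exists>n::int. n \<ge> 1 \<and> (sigma ^^ k) n \<noteq> n"
proof
  fix k :: nat
  assume "k \<in> {1..5}"
  then consider "k \<in> {1, 2, 4, 5}" | "k = 3" by fastforce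
  then show "\<exists>n::int. n \<ge> 1 \<and> (sigma ^^ k) n \<noteq> n"
  proof cases
    case 1
    then have "(sigma ^^ k) (upper_wythoff 1) \<noteq> upper_wythoff 1"
      by (auto simp: eval_nat_numeral)
    then show ?thesis by (metis order_refl upper_wythoff_pos)
  next
    case 2
    then have "(sigma ^^ k) (lower_wythoff (lower_wythoff (upper_wythoff 1))) \<noteq>
        lower_wythoff (lower_wythoff (upper_wythoff 1))"
      by (simp add: eval_nat_numeral)
    then show ?thesis by (metis order_refl wythoff_pos)
  qed
qed

lemma sigma_first_values: "map sigma [1..10] = [2,3,1,8,11,5,16,4,7,24]"
proof -
  have lower_values: "lower_wythoff 1 = 1" "lower_wythoff 2 = 3" "lower_wythoff 3 = 4" "lower_wythoff 4 = 6"
      "lower_wythoff 5 = 8" "lower_wythoff 6 = 9" "lower_wythoff 7 = 11" "lower_wythoff 10 = 16"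
      "lower_wythoff 15 = 24"
    unfolding lower_wythoff_def using phi_bounds by (simp_all add: floor_eq_iff)
  have "[1..10::int] = [1,2,3,4,5,6,7,8,9,10]"
    by (simp add: upto.simps)
  moreover have "sigma 1 = 2"
    using sigma_lower_lower_lower_wythoff[of 1] by (simp add: lower_values upper_wythoff_def)
  moreover have "sigma 2 = 3"
    using sigma_upper_wythoff[of 1] by (simp add: lower_values upper_wythoff_def)
  moreover have "sigma 3 = 1"
    using sigma_lower_upper_wythoff[of 1] by (simp add: lower_values upper_wythoff_def)
  moreover have "sigma 4 = 8"
    using sigma_lower_lower_upper_wythoff[of 1] by (simp add: lower_values upper_wythoff_def)
  moreover have "sigma 5 = 11"
    using sigma_upper_wythoff[of 2] by (simp add: lower_values upper_wythoff_def)
  moreover have "sigma 6 = 5"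
    using sigma_lower_lower_lower_wythoff[of 2] by (simp add: lower_values upper_wythoff_def)
  moreover have "sigma 7 = 16"
    using sigma_upper_wythoff[of 3] by (simp add: lower_values upper_wythoff_def)
  moreover have "sigma 8 = 4"
    using sigma_lower_upper_wythoff[of 2] by (simp add: lower_values upper_wythoff_def)
  moreover have "sigma 9 = 7"
    using sigma_lower_lower_lower_wythoff[of 3] by (simp add: lower_values upper_wythoff_def)
  moreover have "sigma 10 = 24"
    using sigma_upper_wythoff[of 4] by (simp add: lower_values upper_wythoff_def)
  ultimately show ?thesis by simp
qed

lemma bij_betw_sigma_funpow: "bij_betw (sigma ^^ m) {1..} {1..}"
proof (rule bij_betw_funpow, rule bij_betw_if_funpow_id)
  show "sigma ` {1..} \<subseteq> {1..}"
    using sigma_pos by auto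
  show "\<forall>x\<in>{1..}. (sigma ^^ Suc 5) x = x"
    using sigma_funpow_6 by simp
qed

lemma RpermI:
  assumes "bij_betw \<pi> {1..} {1..}" "Rpartition (map fst ps)"
    "\<forall>((i, j), (a, b, c)) \<in> set ps. \<forall>n \<in> R i j.
       \<pi> n = \<lfloor>(of_int a * phi + of_int b) * of_int n + of_int c\<rfloor>"
  shows "Rperm \<pi>"
  using assms unfolding Rperm_def by blast

lemma sigma_on_pieces:
  "\<forall>n \<in> R 1 0. sigma n = \<lfloor>(phi + 1) * n - 2\<rfloor>"
  "\<forall>n \<in> R 3 1. sigma n = \<lfloor>phi * n + 2\<rfloor>"
  "\<forall>n \<in> R 2 2. sigma n = \<lfloor>(phi - 1) * n + 2\<rfloor>"
  "\<forall>n \<in> R 2 0. sigma n = \<lfloor>(phi - 1) * n\<rfloor>"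
  \<comment> \<open>the floor identities only match if \<open>\<lfloor>x + 2\<rfloor>\<close> is not split into \<open>\<lfloor>x\<rfloor> + 2\<close>\<close>
  unfolding R_as_wythoff_words by (auto simp del: floor_add2 floor_diff_numeral)

lemma sigma_funpow_2_on_pieces:
  "\<forall>n \<in> R 2 2. (sigma ^^ 2) n = \<lfloor>phi * n + 2\<rfloor>"
  "\<forall>n \<in> R 1 0. (sigma ^^ 2) n = \<lfloor>phi * n - 2\<rfloor>"
  "\<forall>n \<in> R 4 0 \<union> R 3 1. (sigma ^^ 2) n = n"
  "\<forall>n \<in> R 3 2. (sigma ^^ 2) n = \<lfloor>(2 - phi) * n + 1\<rfloor>"
  unfolding R_as_wythoff_words
  by (auto simp: eval_nat_numeral simp del: floor_add2 floor_diff_numeral)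

lemma sigma_funpow_3_on_pieces:
  "\<forall>n \<in> R 3 1. (sigma ^^ 3) n = \<lfloor>phi * n + 2\<rfloor>"
  "\<forall>n \<in> R 4 0. (sigma ^^ 3) n = \<lfloor>(phi - 1) * n\<rfloor>"
  "\<forall>n \<in> R 3 2 \<union> R 2 2 \<union> R 1 0. (sigma ^^ 3) n = n"
  unfolding R_as_wythoff_words
  by (auto simp: eval_nat_numeral simp del: floor_add2 floor_diff_numeral)

lemma sigma_funpow_4_on_pieces:
  "\<forall>n \<in> R 1 0. (sigma ^^ 4) n = \<lfloor>(phi + 1) * n - 2\<rfloor>"
  "\<forall>n \<in> R 2 2. (sigma ^^ 4) n = \<lfloor>(phi - 1) * n + 2\<rfloor>"
  "\<forall>n \<in> R 3 2. (sigma ^^ 4) n = \<lfloor>(phi - 1) * n\<rfloor>"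
  "\<forall>n \<in> R 4 0 \<union> R 3 1. (sigma ^^ 4) n = n"
  unfolding R_as_wythoff_words
  by (auto simp: eval_nat_numeral simp del: floor_add2 floor_diff_numeral)

lemma sigma_funpow_5_on_pieces:
  "\<forall>n \<in> R 1 1. (sigma ^^ 5) n = \<lfloor>phi * n + 2\<rfloor>"
  "\<forall>n \<in> R 1 0. (sigma ^^ 5) n = \<lfloor>phi * n - 2\<rfloor>"
  "\<forall>n \<in> R 4 0. (sigma ^^ 5) n = \<lfloor>(phi - 1) * n\<rfloor>"
  "\<forall>n \<in> R 3 2. (sigma ^^ 5) n = \<lfloor>(2 - phi) * n + 1\<rfloor>"
  unfolding R_1_1_split R_as_wythoff_words
  by (auto simp: eval_nat_numeral simp del: floor_add2 floor_diff_numeral)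

lemma Rperm_sigma: "Rperm sigma"
  by (rule RpermI[where ps = "[((1,0),(1,1,-2)), ((3,1),(1,0,2)), ((2,2),(1,-1,2)), ((2,0),(1,-1,0))]"])
    (use bij_betw_sigma_funpow[of 1] Rpartition_sigma sigma_on_pieces in
      \<open>simp_all add: algebra_simps\<close>)

lemma Rperm_sigma_funpow_2: "Rperm (sigma ^^ 2)"
  by (rule RpermI[where ps = "[((2,2),(1,0,2)), ((1,0),(1,0,-2)), ((4,0),(0,1,0)), ((3,1),(0,1,0)),
      ((3,2),(-1,2,1))]"])
    (use bij_betw_sigma_funpow Rpartition_sigma_funpow_2 sigma_funpow_2_on_pieces in simp_all)

lemma Rperm_sigma_funpow_3: "Rperm (sigma ^^ 3)"
  by (rule RpermI[where ps = "[((3,1),(1,0,2)), ((4,0),(1,-1,0)), ((3,2),(0,1,0)), ((2,2),(0,1,0)),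
      ((1,0),(0,1,0))]"])
    (use bij_betw_sigma_funpow Rpartition_sigma_funpow_3 sigma_funpow_3_on_pieces in simp_all)

lemma Rperm_sigma_funpow_4: "Rperm (sigma ^^ 4)"
  by (rule RpermI[where ps = "[((1,0),(1,1,-2)), ((2,2),(1,-1,2)), ((3,2),(1,-1,0)), ((4,0),(0,1,0)),
      ((3,1),(0,1,0))]"])
    (use bij_betw_sigma_funpow Rpartition_sigma_funpow_4 sigma_funpow_4_on_pieces in simp_all)

lemma Rperm_sigma_funpow_5: "Rperm (sigma ^^ 5)"
  by (rule RpermI[where ps = "[((1,1),(1,0,2)), ((1,0),(1,0,-2)), ((4,0),(1,-1,0)), ((3,2),(-1,2,1))]"])
    (use bij_betw_sigma_funpow Rpartition_sigma_inverse sigma_funpow_5_on_pieces in simp_all)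

theorem theorem4p4:
  shows
  "Rpartition [(1,0),(3,1),(2,2),(2,0)] \<and> Rperm sigma \<and>
   (\<forall>n::int. n \<ge> 1 \<longrightarrow> (sigma ^^ 6) n = n) \<and>
   (\<forall>k \<in> {1..5::nat}. \<exists>n::int. n \<ge> 1 \<and> (sigma ^^ k) n \<noteq> n) \<and>
   map sigma [1..10] = [2,3,1,8,11,5,16,4,7,24] \<and>
   \<comment> \<open>sigma^2\<close>
   Rperm (sigma ^^ 2) \<and> Rpartition [(2,2),(1,0),(4,0),(3,1),(3,2)] \<and>
   (\<forall>n \<in> R 2 2. (sigma ^^ 2) n = \<lfloor>phi * n + 2\<rfloor>) \<and>
   (\<forall>n \<in> R 1 0. (sigma ^^ 2) n = \<lfloor>phi * n - 2\<rfloor>) \<and>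
   (\<forall>n \<in> R 4 0 \<union> R 3 1. (sigma ^^ 2) n = n) \<and>
   (\<forall>n \<in> R 3 2. (sigma ^^ 2) n = \<lfloor>(2 - phi) * n + 1\<rfloor>) \<and>
   \<comment> \<open>sigma^3\<close>
   Rperm (sigma ^^ 3) \<and> Rpartition [(3,1),(4,0),(3,2),(2,2),(1,0)] \<and>
   (\<forall>n \<in> R 3 1. (sigma ^^ 3) n = \<lfloor>phi * n + 2\<rfloor>) \<and>
   (\<forall>n \<in> R 4 0. (sigma ^^ 3) n = \<lfloor>(phi - 1) * n\<rfloor>) \<and>
   (\<forall>n \<in> R 3 2 \<union> R 2 2 \<union> R 1 0. (sigma ^^ 3) n = n) \<and>
   \<comment> \<open>sigma^4\<close>
   Rperm (sigma ^^ 4) \<and> Rpartition [(1,0),(2,2),(3,2),(4,0),(3,1)] \<and>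
   (\<forall>n \<in> R 1 0. (sigma ^^ 4) n = \<lfloor>(phi + 1) * n - 2\<rfloor>) \<and>
   (\<forall>n \<in> R 2 2. (sigma ^^ 4) n = \<lfloor>(phi - 1) * n + 2\<rfloor>) \<and>
   (\<forall>n \<in> R 3 2. (sigma ^^ 4) n = \<lfloor>(phi - 1) * n\<rfloor>) \<and>
   (\<forall>n \<in> R 4 0 \<union> R 3 1. (sigma ^^ 4) n = n) \<and>
   \<comment> \<open>sigma^5 = sigma^-1\<close>
   Rperm (sigma ^^ 5) \<and> Rpartition [(1,1),(1,0),(4,0),(3,2)] \<and>
   (\<forall>n::int. n \<ge> 1 \<longrightarrow> sigma ((sigma ^^ 5) n) = n \<and> (sigma ^^ 5) (sigma n) = n) \<and>
   (\<forall>n \<in> R 1 1. (sigma ^^ 5) n = \<lfloor>phi * n + 2\<rfloor>) \<and>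
   (\<forall>n \<in> R 1 0. (sigma ^^ 5) n = \<lfloor>phi * n - 2\<rfloor>) \<and>
   (\<forall>n \<in> R 4 0. (sigma ^^ 5) n = \<lfloor>(phi - 1) * n\<rfloor>) \<and>
   (\<forall>n \<in> R 3 2. (sigma ^^ 5) n = \<lfloor>(2 - phi) * n + 1\<rfloor>)"
  by (intro conjI Rpartition_sigma Rperm_sigma sigma_funpow_not_id sigma_first_values
      Rperm_sigma_funpow_2 Rpartition_sigma_funpow_2 sigma_funpow_2_on_pieces
      Rperm_sigma_funpow_3 Rpartition_sigma_funpow_3 sigma_funpow_3_on_pieces
      Rperm_sigma_funpow_4 Rpartition_sigma_funpow_4 sigma_funpow_4_on_pieces
      Rperm_sigma_funpow_5 Rpartition_sigma_inverse sigma_funpow_5_inverse sigma_funpow_5_on_pieces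
      allI impI sigma_funpow_6)

end
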